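(* Let $s>0$, let $m,n\ge 1$ and $1\le k\le\min(m,n)$. Let $W$ be a random $m\times n$ matrix with entries $W_{ij}=1+s\Delta_{ij}$, where the $\Delta_{ij}$ are i.i.d. with a continuous distribution (with density) supported on $[-1,1]$ and symmetric around $0$. Call a square $k\times k$ submatrix $A$ of $W$ (determined by a choice of $k$ rows and $k$ columns) an equilibrium if there exist a real $a>1$ and vectors $x,y\in\mathbb{R}^k$ with nonnegative entries, each summing to $1$, such that $Ax=a\mathbf{1}$ and $A^Ty=a\mathbf{1}$, where $\mathbf{1}$ is the all-ones vector. Then the expected number of $k\times k$ submatrices of $W$ that are equilibria is at least $2\left(\frac{mn}{4k^2}\right)^k$. *)

theory Defs
  imports "HOL-Probability.Probability"
begin

definition is_equilibrium :: "(nat \<Rightarrow> nat \<Rightarrow> real) \<Rightarrow> nat set \<Rightarrow> nat set \<Rightarrow> bool" where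
  "is_equilibrium W R C \<longleftrightarrow>
     (\<exists>a > 1. \<exists>x y.
        (\<forall>j\<in>C. x j \<ge> 0) \<and> (\<Sum>j\<in>C. x j) = 1 \<and>
        (\<forall>i\<in>R. y i \<ge> 0) \<and> (\<Sum>i\<in>R. y i) = 1 \<and>
        (\<forall>i\<in>R. (\<Sum>j\<in>C. W i j * x j) = a) \<and>
        (\<forall>j\<in>C. (\<Sum>i\<in>R. W i j * y i) = a))"

definition num_equilibria :: "nat \<Rightarrow> nat \<Rightarrow> nat \<Rightarrow> (nat \<Rightarrow> nat \<Rightarrow> real) \<Rightarrow> nat" where
  "num_equilibria m n k W =
     card {(R, C). R \<subseteq> {..<m} \<and> card R = k \<and> C \<subseteq> {..<n} \<and> card C = k \<and>
                   is_equilibrium W R C}"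

end

theory Submission
  imports Defs "Jordan_Normal_Form.Determinant"
begin

text \<open>Write \<open>W = 1 + s \<Delta>\<close>. If a \<open>k \<times> k\<close> submatrix \<open>F\<close> of \<open>\<Delta>\<close> is nonsingular and the solutions of
  \<open>F u = 1\<close> and \<open>F\<^sup>T v = 1\<close> are nonnegative, then \<open>u / \<Sum>u\<close> and \<open>v / \<Sum>v\<close> (the two sums agree)
  form an equilibrium of the corresponding submatrix of \<open>W\<close> with value \<open>1 + s / \<Sum>u\<close>.
  For nonsingular \<open>F\<close>, at least two of the \<open>4\<^sup>k\<close> sign rescalings \<open>D F E\<close> (\<open>D\<close>, \<open>E\<close> diagonal with
  entries \<open>\<plusminus>1\<close>) have this property: a pair maximising \<open>e\<^sup>T F\<^sup>-\<^sup>1 d\<close> works, and so does its negative.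
  As the entries are independent, symmetric and atomless, \<open>F\<close> is almost surely nonsingular and all
  rescalings are equally likely, so each submatrix has this property with probability at least
  \<open>2 / 4\<^sup>k\<close>. Summing over the \<open>(m choose k) (n choose k)\<close> submatrices and using
  \<open>(n choose k) \<ge> (n / k)\<^sup>k\<close> gives the bound.\<close>

section \<open>Determinants of square arrays\<close>

definition mat_of_fun :: "nat \<Rightarrow> (nat \<Rightarrow> nat \<Rightarrow> 'a) \<Rightarrow> 'a mat" where
  "mat_of_fun k F = mat k k (\<lambda>(a, b). F a b)"

definition det_fun :: "nat \<Rightarrow> (nat \<Rightarrow> nat \<Rightarrow> 'a :: comm_ring_1) \<Rightarrow> 'a" where
  "det_fun k F = det (mat_of_fun k F)"

lemma mat_of_fun_carrier [simp]: "mat_of_fun k F \<in> carrier_mat k k"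
  by (simp add: mat_of_fun_def)

lemma mat_of_fun_mult_vec: "mat_of_fun k F *\<^sub>v vec k u = vec k (\<lambda>a. \<Sum>b<k. F a b * u b)"
  by (rule eq_vecI) (auto simp: mat_of_fun_def scalar_prod_def lessThan_atLeast0)

lemma det_fun_cong:
  assumes "\<And>a b. a < k \<Longrightarrow> b < k \<Longrightarrow> F a b = G a b"
  shows "det_fun k F = det_fun k G"
proof -
  have "mat_of_fun k F = mat_of_fun k G"
    unfolding mat_of_fun_def by (rule eq_matI) (auto simp: assms)
  then show ?thesis by (simp add: det_fun_def)
qed

lemma det_fun_transpose: "det_fun k (\<lambda>a b. F b a) = det_fun k F"
proof -
  have "mat_of_fun k (\<lambda>a b. F b a) = transpose_mat (mat_of_fun k F)"
    unfolding mat_of_fun_def by (rule eq_matI) auto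
  then show ?thesis by (simp add: det_fun_def det_transpose[OF mat_of_fun_carrier])
qed

lemma det_fun_leibniz:
  "det_fun k F = (\<Sum>p | p permutes {0..<k}. signof p * (\<Prod>i = 0..<k. F i (p i)))"
  unfolding det_fun_def det_def'[OF mat_of_fun_carrier]
  by (intro sum.cong refl arg_cong2[where f = "(*)"] prod.cong)
    (auto simp: mat_of_fun_def permutes_in_image)

lemma det_fun_scale_rows_cols:
  "det_fun k (\<lambda>a b. d a * F a b * e b) = (\<Prod>a<k. d a) * (\<Prod>b<k. e b) * det_fun k F"
proof -
  have prod_perm: "(\<Prod>i = 0..<k. d i * F i (p i) * e (p i))
      = (\<Prod>a<k. d a) * (\<Prod>b<k. e b) * (\<Prod>i = 0..<k. F i (p i))"
    if "p permutes {0..<k}" for p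
  proof -
    have "(\<Prod>i = 0..<k. e (p i)) = (\<Prod>b<k. e b)"
      using prod.permute[OF that, of e] by (simp add: atLeast0LessThan comp_def)
    then show ?thesis by (simp add: prod.distrib atLeast0LessThan)
  qed
  have "det_fun k (\<lambda>a b. d a * F a b * e b) = (\<Sum>p | p permutes {0..<k}.
      signof p * ((\<Prod>a<k. d a) * (\<Prod>b<k. e b) * (\<Prod>i = 0..<k. F i (p i))))"
    unfolding det_fun_leibniz by (rule sum.cong) (simp_all add: prod_perm)
  then show ?thesis by (simp add: det_fun_leibniz sum_distrib_left mult_ac)
qed

lemma det_fun_replace_col:
  assumes "\<And>a. a < k \<Longrightarrow> (\<Sum>b<k. F a b * u b) = z a" and "j < k"
  shows "det_fun k (\<lambda>a b. if b = j then z a else F a b) = u j * det_fun k (F :: nat \<Rightarrow> nat \<Rightarrow> 'a :: field)"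
proof -
  have "mat_of_fun k F *\<^sub>v vec k u = vec k z"
    using assms(1) by (auto simp: mat_of_fun_mult_vec intro!: eq_vecI)
  moreover have "replace_col (mat_of_fun k F) (vec k z) j = mat_of_fun k (\<lambda>a b. if b = j then z a else F a b)"
    unfolding replace_col_def mat_of_fun_def by (rule eq_matI) auto
  ultimately show ?thesis
    using cramer_lemma_mat[of "mat_of_fun k F" k "vec k u" j] assms(2) by (simp add: det_fun_def)
qed

lemma det_fun_replace_row:
  assumes "\<And>b. b < k \<Longrightarrow> (\<Sum>a<k. F a b * v a) = z b" and "i < k"
  shows "det_fun k (\<lambda>a b. if a = i then z b else F a b) = v i * det_fun k (F :: nat \<Rightarrow> nat \<Rightarrow> 'a :: field)"
proof -
  have "det_fun k (\<lambda>a b. if a = i then z b else F a b) = det_fun k (\<lambda>b a. if a = i then z b else F a b)"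
    using det_fun_transpose[of k "\<lambda>b a. if a = i then z b else F a b"] by simp
  also have "\<dots> = v i * det_fun k (\<lambda>b a. F a b)"
    by (rule det_fun_replace_col) (use assms in auto)
  finally show ?thesis using det_fun_transpose[of k F] by simp
qed

lemma det_fun_solvable:
  assumes "det_fun k F \<noteq> (0 :: 'a :: field)"
  shows "\<exists>u. \<forall>a<k. (\<Sum>b<k. F a b * u b) = z a"
proof -
  from det_non_zero_imp_unit[OF mat_of_fun_carrier assms[unfolded det_fun_def], of undefined,
      unfolded Units_def ring_mat_def]
  obtain B where B: "B \<in> carrier_mat k k" "mat_of_fun k F * B = 1\<^sub>m k"
    by auto
  define v where "v = B *\<^sub>v vec k z"
  have "vec k (\<lambda>b. v $ b) = v"
    using B(1) by (auto simp: v_def intro!: eq_vecI)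
  then have "mat_of_fun k F *\<^sub>v vec k (\<lambda>b. v $ b) = (mat_of_fun k F * B) *\<^sub>v vec k z"
    unfolding v_def by (simp add: assoc_mult_mat_vec[OF mat_of_fun_carrier B(1) vec_carrier])
  also have "\<dots> = vec k z"
    unfolding B(2) by simp
  finally have sol: "vec k (\<lambda>a. \<Sum>b<k. F a b * v $ b) = vec k z"
    by (simp only: mat_of_fun_mult_vec)
  have "(\<Sum>b<k. F a b * v $ b) = z a" if "a < k" for a
    using arg_cong[OF sol, of "\<lambda>x. x $ a"] that by simp
  then show ?thesis by blast
qed

lemma det_fun_Suc_split:
  "det_fun (Suc k) F = F 0 0 * det_fun k (\<lambda>a b. F (Suc a) (Suc b))
     + det_fun (Suc k) (\<lambda>a b. if a = 0 \<and> b = 0 then 0 else F a b)"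
proof -
  define A where "A = mat_of_fun (Suc k) F"
  define A0 where "A0 = mat_of_fun (Suc k) (\<lambda>a b. if a = 0 \<and> b = 0 then 0 else F a b)"
  have cof: "cofactor A0 0 j = cofactor A 0 j" for j
    unfolding cofactor_def
    by (rule arg_cong[where f = "\<lambda>M. _ * det M"], rule eq_matI)
      (auto simp: A_def A0_def mat_of_fun_def mat_delete_def)
  have "det A = (\<Sum>j<Suc k. A $$ (0, j) * cofactor A 0 j)"
    unfolding A_def by (rule laplace_expansion_row[OF mat_of_fun_carrier]) simp
  moreover have "det A0 = (\<Sum>j<Suc k. A0 $$ (0, j) * cofactor A 0 j)"
    unfolding cof[symmetric] A0_def by (rule laplace_expansion_row[OF mat_of_fun_carrier]) simp
  ultimately have "det A - det A0 = (\<Sum>j<Suc k. (A $$ (0, j) - A0 $$ (0, j)) * cofactor A 0 j)"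
    by (simp add: sum_subtractf[symmetric] left_diff_distrib)
  also have "\<dots> = (\<Sum>j<Suc k. if j = 0 then F 0 0 * cofactor A 0 0 else 0)"
    by (rule sum.cong) (auto simp: A_def A0_def mat_of_fun_def)
  also have "\<dots> = F 0 0 * cofactor A 0 0"
    by simp
  also have "cofactor A 0 0 = det_fun k (\<lambda>a b. F (Suc a) (Suc b))"
    unfolding cofactor_def det_fun_def
    by (simp, rule arg_cong[where f = det], rule eq_matI) (auto simp: A_def mat_of_fun_def mat_delete_def)
  finally show ?thesis by (simp add: det_fun_def A_def A0_def algebra_simps)
qed

lemma borel_measurable_det_fun:
  assumes "\<And>a b. a < k \<Longrightarrow> b < k \<Longrightarrow> (\<lambda>\<omega>. G \<omega> a b) \<in> borel_measurable M"
  shows "(\<lambda>\<omega>. det_fun k (G \<omega> :: nat \<Rightarrow> nat \<Rightarrow> real)) \<in> borel_measurable M"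
  unfolding det_fun_leibniz
  by (intro borel_measurable_sum borel_measurable_times borel_measurable_prod measurable_const assms)
    (auto simp: permutes_in_image)

section \<open>Nonnegative solvability and equilibria\<close>

text \<open>\<open>F\<close> is nonsingular and the solutions of \<open>F u = 1\<close> and \<open>F\<^sup>T v = 1\<close> are nonnegative.
  The condition is phrased through Cramer's rule, which makes it visibly a measurable
  condition on the entries of \<open>F\<close>.\<close>
definition nonneg_solvable :: "nat \<Rightarrow> (nat \<Rightarrow> nat \<Rightarrow> real) \<Rightarrow> bool" where
  "nonneg_solvable k F \<longleftrightarrow> det_fun k F \<noteq> 0 \<and>
     (\<forall>j<k. 0 \<le> det_fun k (\<lambda>a b. if b = j then 1 else F a b) / det_fun k F) \<and>
     (\<forall>i<k. 0 \<le> det_fun k (\<lambda>a b. if a = i then 1 else F a b) / det_fun k F)"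

lemma nonneg_solvable_cong:
  assumes "\<And>a b. a < k \<Longrightarrow> b < k \<Longrightarrow> F a b = G a b"
  shows "nonneg_solvable k F = nonneg_solvable k G"
proof -
  have "det_fun k (\<lambda>a b. if P a b then 1 else F a b) = det_fun k (\<lambda>a b. if P a b then 1 else G a b)"
    for P by (rule det_fun_cong) (simp add: assms)
  then show ?thesis
    unfolding nonneg_solvable_def using det_fun_cong[of k F G] assms by presburger
qed

lemma nonneg_solvableI:
  assumes "det_fun k F \<noteq> 0"
    and "\<And>a. a < k \<Longrightarrow> (\<Sum>b<k. F a b * u b) = 1" and "\<And>b. b < k \<Longrightarrow> 0 \<le> u b"
    and "\<And>b. b < k \<Longrightarrow> (\<Sum>a<k. F a b * v a) = 1" and "\<And>a. a < k \<Longrightarrow> 0 \<le> v a"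
  shows "nonneg_solvable k F"
  unfolding nonneg_solvable_def
  using assms det_fun_replace_col[of k F u "\<lambda>_. 1"] det_fun_replace_row[of k F v "\<lambda>_. 1"] by auto

lemma nonneg_solvableE:
  assumes "nonneg_solvable k F"
  obtains u v where "\<And>a. a < k \<Longrightarrow> (\<Sum>b<k. F a b * u b) = 1" and "\<And>b. b < k \<Longrightarrow> 0 \<le> u b"
    and "\<And>b. b < k \<Longrightarrow> (\<Sum>a<k. F a b * v a) = 1" and "\<And>a. a < k \<Longrightarrow> 0 \<le> v a"
proof -
  have det: "det_fun k F \<noteq> 0"
    and col: "\<And>j. j < k \<Longrightarrow> 0 \<le> det_fun k (\<lambda>a b. if b = j then 1 else F a b) / det_fun k F"
    and row: "\<And>i. i < k \<Longrightarrow> 0 \<le> det_fun k (\<lambda>a b. if a = i then 1 else F a b) / det_fun k F"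
    using assms by (simp_all add: nonneg_solvable_def)
  have det_T: "det_fun k (\<lambda>b a. F a b) \<noteq> 0"
    using det det_fun_transpose[of k F] by simp
  obtain u where u: "\<forall>a<k. (\<Sum>b<k. F a b * u b) = 1"
    using det_fun_solvable[where z = "\<lambda>_. 1", OF det] by blast
  obtain v where v: "\<forall>b<k. (\<Sum>a<k. F a b * v a) = 1"
    using det_fun_solvable[where z = "\<lambda>_. 1", OF det_T] by blast
  have "0 \<le> u j" if "j < k" for j
    using col[OF that] det_fun_replace_col[of k F u "\<lambda>_. 1" j] u that det by simp
  moreover have "0 \<le> v i" if "i < k" for i
    using row[OF that] det_fun_replace_row[of k F v "\<lambda>_. 1" i] v that det by simp
  ultimately show thesis
    using that u v by blast
qed

text \<open>Both sums equal \<open>v\<^sup>T F u\<close>.\<close>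
lemma sum_solutions_transpose_eq:
  assumes "\<And>a. a < k \<Longrightarrow> (\<Sum>b<k. F a b * u b) = 1" and "\<And>b. b < k \<Longrightarrow> (\<Sum>a<k. F a b * v a) = 1"
  shows "(\<Sum>a<k. v a) = (\<Sum>b<k. u b :: 'a :: comm_semiring_1)"
proof -
  have "(\<Sum>a<k. v a) = (\<Sum>a<k. v a * (\<Sum>b<k. F a b * u b))"
    using assms(1) by simp
  also have "\<dots> = (\<Sum>b<k. u b * (\<Sum>a<k. F a b * v a))"
    by (simp add: sum_distrib_left mult_ac) (rule sum.swap)
  also have "\<dots> = (\<Sum>b<k. u b)"
    using assms(2) by simp
  finally show ?thesis .
qed

lemma is_equilibrium_of_nonneg_solvable:
  assumes "s > 0" and "0 < k" and "nonneg_solvable k F"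
  shows "is_equilibrium (\<lambda>a b. 1 + s * F a b) {..<k} {..<k}"
proof -
  obtain u v where u: "\<And>a. a < k \<Longrightarrow> (\<Sum>b<k. F a b * u b) = 1" "\<And>b. b < k \<Longrightarrow> 0 \<le> u b"
    and v: "\<And>b. b < k \<Longrightarrow> (\<Sum>a<k. F a b * v a) = 1" "\<And>a. a < k \<Longrightarrow> 0 \<le> v a"
    using nonneg_solvableE[OF assms(3)] by blast
  define t where "t = (\<Sum>b<k. u b)"
  have "t \<noteq> 0"
  proof
    assume "t = 0"
    then have "\<forall>b<k. u b = 0"
      using u(2) sum_nonneg_eq_0_iff[of "{..<k}" u] by (simp add: t_def)
    then show False
      using u(1)[of 0] assms(2) by simp
  qed
  moreover have "0 \<le> t"
    unfolding t_def by (rule sum_nonneg) (simp add: u(2))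
  ultimately have t_pos: "t > 0"
    by simp
  have sum_v: "(\<Sum>a<k. v a) = t"
    unfolding t_def using u(1) v(1) by (rule sum_solutions_transpose_eq)
  have affine: "(\<Sum>b<k. (1 + s * G b) * (w b / t)) = (\<Sum>b<k. w b) / t + s * (\<Sum>b<k. G b * w b) / t"
    for G w :: "nat \<Rightarrow> real"
  proof -
    have "(1 + s * G b) * (w b / t) = w b / t + s * (G b * w b) / t" for b
      by (simp add: distrib_right mult.assoc add_divide_distrib)
    then show ?thesis
      by (simp add: sum.distrib sum_divide_distrib[symmetric] sum_distrib_left[symmetric])
  qed
  have rows: "(\<Sum>b<k. (1 + s * F a b) * (u b / t)) = 1 + s / t" if "a < k" for a
    using affine[of "F a" u] u(1)[OF that] t_pos by (simp add: t_def[symmetric] add_divide_distrib)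
  have cols: "(\<Sum>a<k. (1 + s * F a b) * (v a / t)) = 1 + s / t" if "b < k" for b
    using affine[of "\<lambda>a. F a b" v] v(1)[OF that] t_pos sum_v by (simp add: add_divide_distrib)
  have "(\<Sum>b<k. u b / t) = 1" "(\<Sum>a<k. v a / t) = 1"
    using t_pos sum_v by (simp_all add: sum_divide_distrib[symmetric] t_def)
  then show ?thesis
    unfolding is_equilibrium_def using assms(1) u(2) v(2) t_pos rows cols
    by (intro exI[of _ "1 + s / t"] conjI exI[of _ "\<lambda>b. u b / t"] exI[of _ "\<lambda>a. v a / t"]) auto
qed

lemma is_equilibrium_reindex:
  assumes \<rho>: "bij_betw \<rho> A R" and \<kappa>: "bij_betw \<kappa> B C"
    and "is_equilibrium (\<lambda>a b. W (\<rho> a) (\<kappa> b)) A B"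
  shows "is_equilibrium W R C"
proof -
  obtain c x y where c: "c > 1"
    and x: "\<forall>b\<in>B. 0 \<le> x b" "(\<Sum>b\<in>B. x b) = 1" and y: "\<forall>a\<in>A. 0 \<le> y a" "(\<Sum>a\<in>A. y a) = 1"
    and rows: "\<forall>a\<in>A. (\<Sum>b\<in>B. W (\<rho> a) (\<kappa> b) * x b) = c"
    and cols: "\<forall>b\<in>B. (\<Sum>a\<in>A. W (\<rho> a) (\<kappa> b) * y a) = c"
    using assms(3) unfolding is_equilibrium_def by blast
  define x' where "x' = x \<circ> inv_into B \<kappa>"
  define y' where "y' = y \<circ> inv_into A \<rho>"
  have R: "R = \<rho> ` A" and C: "C = \<kappa> ` B"
    using \<rho> \<kappa> by (simp_all add: bij_betw_def)
  have x': "x' (\<kappa> b) = x b" if "b \<in> B" for b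
    using \<kappa> that by (simp add: x'_def bij_betw_def)
  have y': "y' (\<rho> a) = y a" if "a \<in> A" for a
    using \<rho> that by (simp add: y'_def bij_betw_def)
  have sum_C: "(\<Sum>j\<in>C. g j) = (\<Sum>b\<in>B. g (\<kappa> b))" for g :: "nat \<Rightarrow> real"
    by (rule sum.reindex_bij_betw[OF \<kappa>, symmetric])
  have sum_R: "(\<Sum>i\<in>R. g i) = (\<Sum>a\<in>A. g (\<rho> a))" for g :: "nat \<Rightarrow> real"
    by (rule sum.reindex_bij_betw[OF \<rho>, symmetric])
  have "(\<forall>j\<in>C. 0 \<le> x' j) \<and> (\<Sum>j\<in>C. x' j) = 1 \<and> (\<forall>i\<in>R. 0 \<le> y' i) \<and> (\<Sum>i\<in>R. y' i) = 1 \<and>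
      (\<forall>i\<in>R. (\<Sum>j\<in>C. W i j * x' j) = c) \<and> (\<forall>j\<in>C. (\<Sum>i\<in>R. W i j * y' i) = c)"
    using x y rows cols x' y' unfolding sum_C sum_R by (simp add: R C cong: sum.cong)
  then show ?thesis
    unfolding is_equilibrium_def using c by blast
qed

section \<open>Sign rescalings\<close>

definition sign_vectors :: "nat \<Rightarrow> (nat \<Rightarrow> real) set" where
  "sign_vectors k = {..<k} \<rightarrow>\<^sub>E {-1, 1}"

lemma finite_sign_vectors [simp]: "finite (sign_vectors k)"
  by (simp add: sign_vectors_def finite_PiE)

lemma card_sign_vectors: "card (sign_vectors k) = 2 ^ k"
  by (simp add: sign_vectors_def card_PiE numeral_2_eq_2)

lemma sign_vectors_square:
  assumes "e \<in> sign_vectors k" and "b < k"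
  shows "e b * e b = 1"
  using assms by (auto simp: sign_vectors_def PiE_def Pi_def)

lemma sign_vectors_maximizer_nonneg:
  assumes e: "e \<in> sign_vectors k"
    and max: "\<And>e'. e' \<in> sign_vectors k \<Longrightarrow> (\<Sum>b<k. e' b * x b) \<le> (\<Sum>b<k. e b * x b)"
    and j: "j < k"
  shows "0 \<le> e j * x j"
proof -
  have "e(j := - e j) \<in> sign_vectors k"
    using e j by (auto simp: sign_vectors_def PiE_def Pi_def extensional_def)
  moreover have "(\<Sum>b<k. (e(j := - e j)) b * x b) = (\<Sum>b<k. e b * x b) - 2 * (e j * x j)"
  proof -
    have "(\<Sum>b<k. (e(j := - e j)) b * x b) = (\<Sum>b<k. e b * x b - (if b = j then 2 * (e j * x j) else 0))"
      by (rule sum.cong) auto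
    also have "\<dots> = (\<Sum>b<k. e b * x b) - 2 * (e j * x j)"
      using j by (simp add: sum_subtractf)
    finally show ?thesis .
  qed
  ultimately show ?thesis
    using max by fastforce
qed

text \<open>Take a pair of sign vectors maximising the bilinear form; no single sign flip increases it.\<close>
lemma sign_vectors_bilinear_maximizer:
  assumes bilinear: "\<And>d e. (\<Sum>a<k. d a * w e a) = (\<Sum>b<k. e b * u d b)"
  shows "\<exists>d \<in> sign_vectors k. \<exists>e \<in> sign_vectors k.
    (\<forall>b<k. 0 \<le> e b * u d b) \<and> (\<forall>a<k. 0 \<le> d a * w e a)"
proof -
  define S where "S = sign_vectors k \<times> sign_vectors k"
  define Q where "Q p = (\<Sum>a<k. fst p a * w (snd p) a)" for p
  have "(\<lambda>_\<in>{..<k}. 1) \<in> sign_vectors k"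
    by (simp add: sign_vectors_def)
  then have "S \<noteq> {}"
    by (auto simp: S_def)
  then obtain d e where de: "(d, e) \<in> S" and max: "\<And>p. p \<in> S \<Longrightarrow> Q p \<le> Q (d, e)"
    using ex_is_arg_min_if_finite[of S "\<lambda>p. - Q p"] by (fastforce simp: S_def is_arg_min_def)
  have d: "d \<in> sign_vectors k" and e: "e \<in> sign_vectors k"
    using de by (simp_all add: S_def)
  have u_sign: "0 \<le> e b * u d b" if "b < k" for b
  proof (rule sign_vectors_maximizer_nonneg[OF e _ that])
    fix e' assume "e' \<in> sign_vectors k"
    then show "(\<Sum>b<k. e' b * u d b) \<le> (\<Sum>b<k. e b * u d b)"
      using max[of "(d, e')"] d by (simp add: S_def Q_def bilinear)
  qed
  have w_sign: "0 \<le> d a * w e a" if "a < k" for a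
  proof (rule sign_vectors_maximizer_nonneg[OF d _ that])
    fix d' assume "d' \<in> sign_vectors k"
    then show "(\<Sum>a<k. d' a * w e a) \<le> (\<Sum>a<k. d a * w e a)"
      using max[of "(d', e)"] e by (simp add: S_def Q_def)
  qed
  show ?thesis
    using d e u_sign w_sign by blast
qed

lemma nonneg_solvable_sign_rescaled:
  assumes d: "d \<in> sign_vectors k" and e: "e \<in> sign_vectors k" and det: "det_fun k F \<noteq> 0"
    and u: "\<And>a. a < k \<Longrightarrow> (\<Sum>b<k. F a b * u b) = d a" and u_sign: "\<And>b. b < k \<Longrightarrow> 0 \<le> e b * u b"
    and v: "\<And>b. b < k \<Longrightarrow> (\<Sum>a<k. F a b * v a) = e b" and v_sign: "\<And>a. a < k \<Longrightarrow> 0 \<le> d a * v a"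
  shows "nonneg_solvable k (\<lambda>a b. d a * F a b * e b)"
proof (rule nonneg_solvableI)
  have "(\<Prod>a<k. d a) \<noteq> 0" "(\<Prod>b<k. e b) \<noteq> 0"
    using d e by (auto simp: sign_vectors_def PiE_def Pi_def)
  then show "det_fun k (\<lambda>a b. d a * F a b * e b) \<noteq> 0"
    by (simp add: det_fun_scale_rows_cols det)
next
  fix a assume "a < k"
  have "(\<Sum>b<k. d a * F a b * e b * (e b * u b)) = d a * (\<Sum>b<k. F a b * u b)"
    unfolding sum_distrib_left by (rule sum.cong) (simp_all add: sign_vectors_square[OF e] mult_ac)
  then show "(\<Sum>b<k. d a * F a b * e b * (e b * u b)) = 1"
    using u \<open>a < k\<close> sign_vectors_square[OF d] by simp
next
  fix b assume "b < k"
  have "(\<Sum>a<k. d a * F a b * e b * (d a * v a)) = e b * (\<Sum>a<k. F a b * v a)"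
    unfolding sum_distrib_left by (rule sum.cong) (simp_all add: sign_vectors_square[OF d] mult_ac)
  then show "(\<Sum>a<k. d a * F a b * e b * (d a * v a)) = 1"
    using v \<open>b < k\<close> sign_vectors_square[OF e] by simp
qed (use u_sign v_sign in auto)

text \<open>Take \<open>u d = F\<^sup>-\<^sup>1 d\<close> and \<open>w e = F\<^sup>-\<^sup>T e\<close>; the bilinear form is then \<open>e\<^sup>T F\<^sup>-\<^sup>1 d\<close>.\<close>
lemma nonneg_solvable_sign_flip_exists:
  assumes det: "det_fun k F \<noteq> 0"
  obtains d e where "d \<in> sign_vectors k" and "e \<in> sign_vectors k"
    and "nonneg_solvable k (\<lambda>a b. d a * F a b * e b)"
proof -
  have "\<forall>d. \<exists>x. \<forall>a<k. (\<Sum>b<k. F a b * x b) = d a"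
    using det_fun_solvable[OF det] by blast
  then obtain u where u: "\<And>d a. a < k \<Longrightarrow> (\<Sum>b<k. F a b * u d b) = d a"
    by metis
  have "det_fun k (\<lambda>b a. F a b) \<noteq> 0"
    using det det_fun_transpose[of k F] by simp
  then have "\<forall>e. \<exists>x. \<forall>b<k. (\<Sum>a<k. F a b * x a) = e b"
    using det_fun_solvable by blast
  then obtain w where w: "\<And>e b. b < k \<Longrightarrow> (\<Sum>a<k. F a b * w e a) = e b"
    by metis
  have "(\<Sum>a<k. d a * w e a) = (\<Sum>b<k. e b * u d b)" for d e
  proof -
    have "(\<Sum>b<k. e b * u d b) = (\<Sum>b<k. (\<Sum>a<k. F a b * w e a) * u d b)"
      by (rule sum.cong) (simp_all add: w)
    also have "\<dots> = (\<Sum>a<k. w e a * (\<Sum>b<k. F a b * u d b))"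
      by (simp add: sum_distrib_left sum_distrib_right mult_ac) (rule sum.swap)
    also have "\<dots> = (\<Sum>a<k. d a * w e a)"
      by (rule sum.cong) (simp_all add: u)
    finally show ?thesis ..
  qed
  then obtain d e where d: "d \<in> sign_vectors k" and e: "e \<in> sign_vectors k"
    and u_sign: "\<forall>b<k. 0 \<le> e b * u d b" and w_sign: "\<forall>a<k. 0 \<le> d a * w e a"
    using sign_vectors_bilinear_maximizer by blast
  show thesis
    using nonneg_solvable_sign_rescaled[OF d e det u[of _ d] u_sign[rule_format] w[of _ e] w_sign[rule_format]]
    by (rule that[OF d e])
qed

text \<open>The second solution is the negated pair of sign vectors, which rescales \<open>F\<close> identically.\<close>
lemma two_le_card_nonneg_solvable_sign_flips:
  assumes "0 < k" and "det_fun k F \<noteq> 0"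
  shows "2 \<le> card {p \<in> sign_vectors k \<times> sign_vectors k.
                    nonneg_solvable k (\<lambda>a b. fst p a * F a b * snd p b)}"
    (is "_ \<le> card ?G")
proof -
  obtain d e where d: "d \<in> sign_vectors k" and e: "e \<in> sign_vectors k"
    and sol: "nonneg_solvable k (\<lambda>a b. d a * F a b * e b)"
    using nonneg_solvable_sign_flip_exists[OF assms(2)] by blast
  define d' where "d' = (\<lambda>a\<in>{..<k}. - d a)"
  define e' where "e' = (\<lambda>b\<in>{..<k}. - e b)"
  have "d' \<in> sign_vectors k" "e' \<in> sign_vectors k"
    using d e by (auto simp: d'_def e'_def sign_vectors_def PiE_def Pi_def)
  moreover have "nonneg_solvable k (\<lambda>a b. d' a * F a b * e' b)"
    using sol by (subst nonneg_solvable_cong[where G = "\<lambda>a b. d a * F a b * e b"]) (simp_all add: d'_def e'_def)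
  ultimately have "{(d, e), (d', e')} \<subseteq> ?G"
    using d e sol by simp
  moreover have "d 0 \<noteq> d' 0"
    using d assms(1) by (auto simp: d'_def sign_vectors_def PiE_def Pi_def)
  then have "card {(d, e), (d', e')} = 2"
    by (auto simp: card_insert_if)
  moreover have "finite ?G"
    by simp
  ultimately show ?thesis
    using card_mono[of ?G "{(d, e), (d', e')}"] by simp
qed

section \<open>Random matrices with independent symmetric atomless entries\<close>

lemma sets_nonneg_solvable:
  assumes "\<And>a b. a < k \<Longrightarrow> b < k \<Longrightarrow> (\<lambda>\<omega>. G \<omega> a b) \<in> borel_measurable N"
  shows "{\<omega> \<in> space N. nonneg_solvable k (G \<omega>)} \<in> sets N"
proof -
  have [measurable]: "(\<lambda>\<omega>. det_fun k (\<lambda>a b. if P a b then 1 else G \<omega> a b)) \<in> borel_measurable N" for P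
  proof (rule borel_measurable_det_fun)
    fix a b assume "a < k" "b < k"
    then show "(\<lambda>\<omega>. if P a b then 1 else G \<omega> a b) \<in> borel_measurable N"
      by (cases "P a b") (simp_all add: assms)
  qed
  have [measurable]: "(\<lambda>\<omega>. det_fun k (G \<omega>)) \<in> borel_measurable N"
    by (rule borel_measurable_det_fun) (rule assms)
  show ?thesis
    unfolding nonneg_solvable_def by measurable
qed

lemma emeasure_sign_scaled:
  fixes M :: "real measure"
  assumes sets_M: "sets M = sets borel" and symm: "distr M borel uminus = M"
    and c: "c \<in> {-1, 1}" and A: "A \<in> sets borel"
  shows "emeasure M {y. c * y \<in> A} = emeasure M A"
proof (cases "c = 1")
  case False
  then have "c = -1"
    using c by simp
  have space_M: "space M = UNIV"
    using sets_eq_imp_space_eq[OF sets_M] by simp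
  have "emeasure M A = emeasure (distr M borel uminus) A"
    using symm by simp
  also have "\<dots> = emeasure M (uminus -` A \<inter> space M)"
    by (rule emeasure_distr) (simp_all add: measurable_cong_sets[OF sets_M refl] A)
  finally show ?thesis
    using \<open>c = -1\<close> by (simp add: space_M vimage_def)
qed simp

lemma borel_measurable_PiM_component:
  fixes M :: "real measure"
  assumes "sets M = sets borel" and "i \<in> I"
  shows "(\<lambda>\<omega>. \<omega> i) \<in> borel_measurable (PiM I (\<lambda>_. M))"
proof -
  have "(\<lambda>\<omega>. \<omega> i) \<in> measurable (PiM I (\<lambda>_. M)) M"
    by (rule measurable_component_singleton[OF assms(2)])
  then show ?thesis
    by (simp only: measurable_cong_sets[OF refl assms(1)])
qed

lemma measurable_PiM_scale:
  fixes M :: "real measure"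
  assumes sets_M: "sets M = sets borel"
  shows "(\<lambda>\<omega>. \<lambda>i\<in>I. \<sigma> i * \<omega> i) \<in> measurable (PiM I (\<lambda>_. M)) (PiM I (\<lambda>_. M))"
proof (rule measurable_restrict)
  fix i assume "i \<in> I"
  then have [measurable]: "(\<lambda>\<omega>. \<omega> i) \<in> borel_measurable (PiM I (\<lambda>_. M))"
    by (rule borel_measurable_PiM_component[OF sets_M])
  have "(\<lambda>\<omega>. \<sigma> i * \<omega> i) \<in> borel_measurable (PiM I (\<lambda>_. M))"
    by measurable
  then show "(\<lambda>\<omega>. \<sigma> i * \<omega> i) \<in> measurable (PiM I (\<lambda>_. M)) M"
    by (simp add: measurable_cong_sets[OF refl sets_M])
qed

lemma distr_PiM_sign_flip:
  fixes M :: "real measure"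
  assumes M: "prob_space M" and sets_M: "sets M = sets borel"
    and symm: "distr M borel uminus = M"
    and I: "finite I" and \<sigma>: "\<And>i. i \<in> I \<Longrightarrow> \<sigma> i \<in> {-1, 1}"
  shows "distr (PiM I (\<lambda>_. M)) (PiM I (\<lambda>_. M)) (\<lambda>\<omega>. \<lambda>i\<in>I. \<sigma> i * \<omega> i) = PiM I (\<lambda>_. M)"
    (is "distr ?P ?P ?\<phi> = ?P")
proof -
  interpret product_prob_space "\<lambda>_. M"
    by (rule product_prob_spaceI) (rule M)
  have space_M: "space M = UNIV"
    using sets_eq_imp_space_eq[OF sets_M] by simp
  have [measurable]: "?\<phi> \<in> measurable ?P ?P"
    by (rule measurable_PiM_scale[OF sets_M])
  show ?thesis
  proof (rule PiM_eqI[OF I])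
    fix A assume A: "\<And>i. i \<in> I \<Longrightarrow> A i \<in> sets M"
    have "?\<phi> -` Pi\<^sub>E I A \<inter> space ?P = Pi\<^sub>E I (\<lambda>i. {y. \<sigma> i * y \<in> A i})"
      by (auto simp: space_PiM space_M PiE_def Pi_def extensional_def)
    moreover have "emeasure ?P (Pi\<^sub>E I (\<lambda>i. {y. \<sigma> i * y \<in> A i})) = (\<Prod>i\<in>I. emeasure M {y. \<sigma> i * y \<in> A i})"
      using A I by (intro emeasure_PiM) (simp_all add: sets_M)
    moreover have "emeasure ?P (?\<phi> -` Pi\<^sub>E I A \<inter> space ?P) = emeasure (distr ?P ?P ?\<phi>) (Pi\<^sub>E I A)"
      using A I by (intro emeasure_distr[symmetric]) (auto intro!: sets_PiM_I_finite)
    ultimately show "emeasure (distr ?P ?P ?\<phi>) (Pi\<^sub>E I A) = (\<Prod>i\<in>I. emeasure M (A i))"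
      using A \<sigma> emeasure_sign_scaled[OF sets_M symm] by (simp add: sets_M)
  qed simp
qed

text \<open>Fubini in the coordinate \<open>i\<close>: for fixed other coordinates, \<open>\<omega> i * c \<omega> + r \<omega>\<close> vanishes
  at a single value of \<open>\<omega> i\<close> once \<open>c \<omega> \<noteq> 0\<close>, and single points are null sets.\<close>
lemma AE_PiM_affine_coordinate_ne_0:
  fixes M :: "real measure"
  assumes M: "prob_space M" and sets_M: "sets M = sets borel"
    and atomless: "\<And>x. emeasure M {x} = 0"
    and I: "finite I" and i: "i \<in> I"
    and c [measurable]: "c \<in> borel_measurable (PiM I (\<lambda>_. M))"
    and r [measurable]: "r \<in> borel_measurable (PiM I (\<lambda>_. M))"
    and c_upd: "\<And>w y. c (w(i := y)) = c w" and r_upd: "\<And>w y. r (w(i := y)) = r w"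
    and AE_c: "AE w in PiM I (\<lambda>_. M). c w \<noteq> 0"
  shows "AE w in PiM I (\<lambda>_. M). w i * c w + r w \<noteq> 0"
proof -
  interpret product_prob_space "\<lambda>_. M"
    by (rule product_prob_spaceI) (rule M)
  define J where "J = I - {i}"
  have PiM_I: "PiM I (\<lambda>_. M) = PiM (insert i J) (\<lambda>_. M)"
    using i by (simp add: J_def insert_absorb)
  define B where "B = {w \<in> space (PiM I (\<lambda>_. M)). c w \<noteq> 0 \<and> w i * c w + r w = 0}"
  have [measurable]: "(\<lambda>w. w i) \<in> borel_measurable (PiM I (\<lambda>_. M))"
    by (rule borel_measurable_PiM_component[OF sets_M i])
  have B_sets: "B \<in> sets (PiM I (\<lambda>_. M))"
    unfolding B_def by measurable
  have fibre_null: "(\<integral>\<^sup>+y. indicator B (w(i := y)) \<partial>M) = 0" for w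
  proof -
    have "indicator B (w(i := y)) \<le> (indicator {- r w / c w} y :: ennreal)" for y
      by (auto simp: B_def c_upd r_upd indicator_def field_simps)
    then have "(\<integral>\<^sup>+y. indicator B (w(i := y)) \<partial>M) \<le> emeasure M {- r w / c w}"
      using nn_integral_mono[of M "\<lambda>y. indicator B (w(i := y))" "indicator {- r w / c w}"]
      by (simp add: sets_M)
    then show ?thesis
      by (simp add: atomless)
  qed
  have "emeasure (PiM I (\<lambda>_. M)) B = (\<integral>\<^sup>+w. indicator B w \<partial>PiM I (\<lambda>_. M))"
    using B_sets by simp
  also have "\<dots> = (\<integral>\<^sup>+w. (\<integral>\<^sup>+y. indicator B (w(i := y)) \<partial>M) \<partial>PiM J (\<lambda>_. M))"
    unfolding PiM_I using I B_sets by (intro product_nn_integral_insert) (simp_all add: J_def insert_absorb[OF i])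
  finally have "B \<in> null_sets (PiM I (\<lambda>_. M))"
    using B_sets by (simp add: fibre_null null_sets_def)
  then have "AE w in PiM I (\<lambda>_. M). w \<notin> B"
    by (rule AE_not_in)
  with AE_c AE_space show ?thesis
    by eventually_elim (auto simp: B_def)
qed

lemma AE_PiM_det_fun_ne_0:
  fixes M :: "real measure"
  assumes M: "prob_space M" and sets_M: "sets M = sets borel"
    and atomless: "\<And>x. emeasure M {x} = 0" and I: "finite I"
    and "inj_on \<rho> {..<k}" and "inj_on \<kappa> {..<k}"
    and "\<And>a b. a < k \<Longrightarrow> b < k \<Longrightarrow> (\<rho> a, \<kappa> b) \<in> I"
  shows "AE \<omega> in PiM I (\<lambda>_. M). det_fun k (\<lambda>a b. \<omega> (\<rho> a, \<kappa> b)) \<noteq> 0"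
  using assms(5-7)
proof (induction k arbitrary: \<rho> \<kappa>)
  case 0
  then show ?case
    by (simp add: det_fun_def det_dim_zero mat_of_fun_def)
next
  case (Suc k)
  define i where "i = (\<rho> 0, \<kappa> 0)"
  define c where "c \<omega> = det_fun k (\<lambda>a b. \<omega> (\<rho> (Suc a), \<kappa> (Suc b)))"
    for \<omega> :: "_ \<Rightarrow> real"
  define r where "r \<omega> = det_fun (Suc k) (\<lambda>a b. if a = 0 \<and> b = 0 then 0 else \<omega> (\<rho> a, \<kappa> b))"
    for \<omega> :: "_ \<Rightarrow> real"
  have entry_ne_i: "(\<rho> a, \<kappa> b) \<noteq> i" if "a < Suc k" "b < Suc k" "a \<noteq> 0 \<or> b \<noteq> 0" for a b
    using Suc.prems(1,2) that by (auto simp: i_def dest: inj_onD)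
  have "AE \<omega> in PiM I (\<lambda>_. M). \<omega> i * c \<omega> + r \<omega> \<noteq> 0"
  proof (rule AE_PiM_affine_coordinate_ne_0[OF M sets_M atomless I])
    show "i \<in> I"
      using Suc.prems(3) by (simp add: i_def)
    show "c \<in> borel_measurable (PiM I (\<lambda>_. M))"
      unfolding c_def using Suc.prems(3)
      by (auto intro!: borel_measurable_det_fun borel_measurable_PiM_component[OF sets_M])
    show "r \<in> borel_measurable (PiM I (\<lambda>_. M))"
      unfolding r_def using Suc.prems(3)
      by (intro borel_measurable_det_fun measurable_If borel_measurable_PiM_component[OF sets_M])
        (auto intro: sets.sets_Collect_const)
    show "c (w(i := y)) = c w" for w y
      unfolding c_def by (rule det_fun_cong) (simp add: entry_ne_i)
    show "r (w(i := y)) = r w" for w y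
      unfolding r_def by (rule det_fun_cong) (auto simp: entry_ne_i)
    show "AE \<omega> in PiM I (\<lambda>_. M). c \<omega> \<noteq> 0"
      unfolding c_def using Suc.prems by (intro Suc.IH) (auto simp: inj_on_def)
  qed
  moreover have "det_fun (Suc k) (\<lambda>a b. \<omega> (\<rho> a, \<kappa> b)) = \<omega> i * c \<omega> + r \<omega>" for \<omega>
    using det_fun_Suc_split[of k "\<lambda>a b. \<omega> (\<rho> a, \<kappa> b)"] by (simp add: c_def r_def i_def)
  ultimately show ?case
    by simp
qed

lemma sign_vectors_extend:
  assumes "inj_on \<rho> {..<k}" and "d \<in> sign_vectors k"
  obtains d' where "\<And>i. d' i \<in> {-1, 1}" and "\<And>a. a < k \<Longrightarrow> d' (\<rho> a) = d a"
proof
  define d' where "d' i = (if i \<in> \<rho> ` {..<k} then d (the_inv_into {..<k} \<rho> i) else 1)" for i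
  show "d' (\<rho> a) = d a" if "a < k" for a
    using assms(1) that by (simp add: d'_def the_inv_into_f_f)
  show "d' i \<in> {-1, 1}" for i
  proof (cases "i \<in> \<rho> ` {..<k}")
    case True
    then have "the_inv_into {..<k} \<rho> i < k"
      using the_inv_into_into[OF assms(1) True, of "{..<k}"] by simp
    then show ?thesis
      using True assms(2) by (auto simp: d'_def sign_vectors_def PiE_def Pi_def)
  qed (simp add: d'_def)
qed

text \<open>Multiplying the entries of \<open>F\<close> by \<open>d a e b\<close> is a coordinatewise sign change, which
  preserves the symmetric product measure.\<close>
lemma emeasure_nonneg_solvable_sign_flip:
  fixes M :: "real measure"
  assumes M: "prob_space M" and sets_M: "sets M = sets borel" and symm: "distr M borel uminus = M"
    and I: "finite I" and \<rho>: "inj_on \<rho> {..<k}" and \<kappa>: "inj_on \<kappa> {..<k}"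
    and in_I: "\<And>a b. a < k \<Longrightarrow> b < k \<Longrightarrow> (\<rho> a, \<kappa> b) \<in> I"
    and d: "d \<in> sign_vectors k" and e: "e \<in> sign_vectors k"
  shows "emeasure (PiM I (\<lambda>_. M))
           {\<omega> \<in> space (PiM I (\<lambda>_. M)). nonneg_solvable k (\<lambda>a b. d a * \<omega> (\<rho> a, \<kappa> b) * e b)}
       = emeasure (PiM I (\<lambda>_. M)) {\<omega> \<in> space (PiM I (\<lambda>_. M)). nonneg_solvable k (\<lambda>a b. \<omega> (\<rho> a, \<kappa> b))}"
proof -
  let ?P = "PiM I (\<lambda>_. M)"
  obtain d' where d': "\<And>i. d' i \<in> {-1, 1}" "\<And>a. a < k \<Longrightarrow> d' (\<rho> a) = d a"
    using sign_vectors_extend[OF \<rho> d] by blast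
  obtain e' where e': "\<And>j. e' j \<in> {-1, 1}" "\<And>b. b < k \<Longrightarrow> e' (\<kappa> b) = e b"
    using sign_vectors_extend[OF \<kappa> e] by blast
  define \<phi> where "\<phi> \<omega> = (\<lambda>q\<in>I. (d' (fst q) * e' (snd q)) * \<omega> q)" for \<omega> :: "_ \<Rightarrow> real"
  define E0 where "E0 = {\<omega> \<in> space ?P. nonneg_solvable k (\<lambda>a b. \<omega> (\<rho> a, \<kappa> b))}"
  have \<phi>: "\<phi> \<in> measurable ?P ?P"
    unfolding \<phi>_def by (rule measurable_PiM_scale[OF sets_M])
  have E0_sets: "E0 \<in> sets ?P"
    unfolding E0_def using in_I
    by (intro sets_nonneg_solvable borel_measurable_PiM_component[OF sets_M])
  have "d' (fst q) * e' (snd q) \<in> {-1, 1}" for q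
    using d'(1)[of "fst q"] e'(1)[of "snd q"] by auto
  then have "emeasure ?P E0 = emeasure (distr ?P ?P \<phi>) E0"
    unfolding \<phi>_def using distr_PiM_sign_flip[OF M sets_M symm I] by simp
  also have "\<dots> = emeasure ?P (\<phi> -` E0 \<inter> space ?P)"
    by (rule emeasure_distr[OF \<phi> E0_sets])
  also have "\<phi> -` E0 \<inter> space ?P
      = {\<omega> \<in> space ?P. nonneg_solvable k (\<lambda>a b. d a * \<omega> (\<rho> a, \<kappa> b) * e b)}"
  proof -
    have "nonneg_solvable k (\<lambda>a b. \<phi> \<omega> (\<rho> a, \<kappa> b)) = nonneg_solvable k (\<lambda>a b. d a * \<omega> (\<rho> a, \<kappa> b) * e b)"
      for \<omega>
      by (rule nonneg_solvable_cong) (simp add: \<phi>_def in_I d'(2) e'(2))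
    moreover have "\<phi> \<omega> \<in> space ?P" if "\<omega> \<in> space ?P" for \<omega>
      using measurable_space[OF \<phi> that] .
    ultimately show ?thesis
      by (auto simp: E0_def)
  qed
  finally show ?thesis
    by (simp add: E0_def)
qed

text \<open>Almost surely the submatrix is nonsingular, and then at least two of its sign rescalings are
  \<open>nonneg_solvable\<close>.\<close>
lemma two_le_sum_emeasure_nonneg_solvable_sign_flips:
  fixes M :: "real measure"
  assumes M: "prob_space M" and sets_M: "sets M = sets borel" and atomless: "\<And>x. emeasure M {x} = 0"
    and I: "finite I" and k: "0 < k" and \<rho>: "inj_on \<rho> {..<k}" and \<kappa>: "inj_on \<kappa> {..<k}"
    and in_I: "\<And>a b. a < k \<Longrightarrow> b < k \<Longrightarrow> (\<rho> a, \<kappa> b) \<in> I"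
  defines "P \<equiv> PiM I (\<lambda>_. M)"
    and "E p \<equiv> {\<omega> \<in> space (PiM I (\<lambda>_. M)).
                   nonneg_solvable k (\<lambda>a b. fst p a * \<omega> (\<rho> a, \<kappa> b) * snd p b)}"
  shows "2 \<le> (\<Sum>p \<in> sign_vectors k \<times> sign_vectors k. emeasure P (E p))"
proof -
  interpret prob_space P
    unfolding P_def by (rule prob_space_PiM) (rule M)
  let ?S = "sign_vectors k \<times> sign_vectors k"
  have E_sets: "E p \<in> sets P" for p
    unfolding E_def P_def using in_I
    by (intro sets_nonneg_solvable borel_measurable_times borel_measurable_const
        borel_measurable_PiM_component[OF sets_M])
  have "AE \<omega> in P. det_fun k (\<lambda>a b. \<omega> (\<rho> a, \<kappa> b)) \<noteq> 0"
    unfolding P_def using M sets_M atomless I \<rho> \<kappa> in_I by (rule AE_PiM_det_fun_ne_0)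
  then have AE_two: "AE \<omega> in P. 2 \<le> (\<Sum>p\<in>?S. indicator (E p) \<omega> :: ennreal)"
    using AE_space
  proof eventually_elim
    case (elim \<omega>)
    have "{p \<in> ?S. \<omega> \<in> E p} = {p \<in> ?S. nonneg_solvable k (\<lambda>a b. fst p a * \<omega> (\<rho> a, \<kappa> b) * snd p b)}"
      using elim(2) unfolding E_def P_def by blast
    then have "2 \<le> card {p \<in> ?S. \<omega> \<in> E p}"
      using two_le_card_nonneg_solvable_sign_flips[OF k elim(1)] by (simp only:)
    then have "(2 :: ennreal) \<le> of_nat (card {p \<in> ?S. \<omega> \<in> E p})"
      using of_nat_mono[of 2] by fastforce
    moreover have "(\<Sum>p\<in>?S. indicator (E p) \<omega>) = (of_nat (card {p \<in> ?S. \<omega> \<in> E p}) :: ennreal)"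
      by (simp add: indicator_def sum.If_cases Int_def)
    ultimately show ?case
      by simp
  qed
  have "2 = (\<integral>\<^sup>+\<omega>. 2 \<partial>P)"
    by (simp add: emeasure_space_1)
  also have "\<dots> \<le> (\<integral>\<^sup>+\<omega>. (\<Sum>p\<in>?S. indicator (E p) \<omega>) \<partial>P)"
    using AE_two by (rule nn_integral_mono_AE)
  also have "\<dots> = (\<Sum>p\<in>?S. emeasure P (E p))"
    using E_sets by (simp add: nn_integral_sum)
  finally show ?thesis .
qed

lemma emeasure_nonneg_solvable_ge:
  fixes M :: "real measure"
  assumes M: "prob_space M" and sets_M: "sets M = sets borel" and symm: "distr M borel uminus = M"
    and atomless: "\<And>x. emeasure M {x} = 0"
    and I: "finite I" and k: "0 < k" and \<rho>: "inj_on \<rho> {..<k}" and \<kappa>: "inj_on \<kappa> {..<k}"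
    and in_I: "\<And>a b. a < k \<Longrightarrow> b < k \<Longrightarrow> (\<rho> a, \<kappa> b) \<in> I"
  shows "ennreal (2 / 4 ^ k)
    \<le> emeasure (PiM I (\<lambda>_. M)) {\<omega> \<in> space (PiM I (\<lambda>_. M)). nonneg_solvable k (\<lambda>a b. \<omega> (\<rho> a, \<kappa> b))}"
proof -
  let ?P = "PiM I (\<lambda>_. M)"
  interpret P: prob_space ?P
    by (rule prob_space_PiM) (rule M)
  define E0 where "E0 = {\<omega> \<in> space ?P. nonneg_solvable k (\<lambda>a b. \<omega> (\<rho> a, \<kappa> b))}"
  have "2 \<le> (\<Sum>p \<in> sign_vectors k \<times> sign_vectors k.
      emeasure ?P {\<omega> \<in> space ?P. nonneg_solvable k (\<lambda>a b. fst p a * \<omega> (\<rho> a, \<kappa> b) * snd p b)})"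
    by (rule two_le_sum_emeasure_nonneg_solvable_sign_flips[OF M sets_M atomless I k \<rho> \<kappa> in_I])
  also have "\<dots> = (\<Sum>p \<in> sign_vectors k \<times> sign_vectors k. emeasure ?P E0)"
    using emeasure_nonneg_solvable_sign_flip[OF M sets_M symm I \<rho> \<kappa> in_I]
    by (intro sum.cong) (auto simp: E0_def)
  also have "\<dots> = of_nat (4 ^ k) * emeasure ?P E0"
    by (simp add: card_cartesian_product card_sign_vectors power_mult_distrib[symmetric])
  finally have "ennreal 2 \<le> ennreal (4 ^ k) * ennreal (P.prob E0)"
    by (simp add: P.emeasure_eq_measure ennreal_of_nat_eq_real_of_nat)
  then have "2 \<le> 4 ^ k * P.prob E0"
    by (simp add: ennreal_mult[symmetric] ennreal_le_iff)
  then show ?thesis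
    by (simp add: P.emeasure_eq_measure E0_def divide_le_eq mult.commute)
qed

section \<open>Expected number of equilibria\<close>

definition submatrix :: "(nat \<Rightarrow> nat \<Rightarrow> 'a) \<Rightarrow> nat set \<Rightarrow> nat set \<Rightarrow> nat \<Rightarrow> nat \<Rightarrow> 'a" where
  "submatrix W R C = (\<lambda>a b. W (sorted_list_of_set R ! a) (sorted_list_of_set C ! b))"

lemma bij_betw_nth_sorted_list_of_set:
  "finite R \<Longrightarrow> bij_betw ((!) (sorted_list_of_set R)) {..<card R} R"
  by (rule bij_betw_nth) simp_all

lemma is_equilibrium_of_nonneg_solvable_submatrix:
  assumes "s > 0" and "finite R" and "finite C" and "card R = k" and "card C = k" and "0 < k"
    and "nonneg_solvable k (submatrix \<Delta> R C)"
  shows "is_equilibrium (\<lambda>i j. 1 + s * \<Delta> i j) R C"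
  using is_equilibrium_reindex[OF bij_betw_nth_sorted_list_of_set[OF assms(2)]
      bij_betw_nth_sorted_list_of_set[OF assms(3)]]
    is_equilibrium_of_nonneg_solvable[OF assms(1,6,7)] assms(4,5)
  by (simp add: submatrix_def)

lemma card_nonneg_solvable_submatrices_le_num_equilibria:
  assumes "s > 0" and "0 < k"
  shows "card {p \<in> {R. R \<subseteq> {..<m} \<and> card R = k} \<times> {C. C \<subseteq> {..<n} \<and> card C = k}.
      nonneg_solvable k (submatrix \<Delta> (fst p) (snd p))} \<le> num_equilibria m n k (\<lambda>i j. 1 + s * \<Delta> i j)"
proof -
  have finite: "finite {R. R \<subseteq> {..<l} \<and> card R = k}" for l :: nat
    by (rule finite_subset[of _ "Pow {..<l}"]) auto
  have "is_equilibrium (\<lambda>i j. 1 + s * \<Delta> i j) R C"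
    if "R \<subseteq> {..<m}" "card R = k" "C \<subseteq> {..<n}" "card C = k" "nonneg_solvable k (submatrix \<Delta> R C)" for R C
    using that assms finite_subset[of R "{..<m}"] finite_subset[of C "{..<n}"]
    by (intro is_equilibrium_of_nonneg_solvable_submatrix) auto
  then show ?thesis
    unfolding num_equilibria_def
    by (intro card_mono finite_subset[OF _ finite_cartesian_product[OF finite finite]]) auto
qed

lemma emeasure_nonneg_solvable_submatrix_ge:
  fixes M :: "real measure"
  assumes M: "prob_space M" and sets_M: "sets M = sets borel" and symm: "distr M borel uminus = M"
    and atomless: "\<And>x. emeasure M {x} = 0" and k: "0 < k"
    and R: "R \<subseteq> {..<m}" "card R = k" and C: "C \<subseteq> {..<n}" "card C = k"
  defines "P \<equiv> PiM ({..<m} \<times> {..<n}) (\<lambda>_. M)"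
  shows "{\<omega> \<in> space P. nonneg_solvable k (submatrix (\<lambda>i j. \<omega> (i, j)) R C)} \<in> sets P"
    and "ennreal (2 / 4 ^ k) \<le> emeasure P {\<omega> \<in> space P. nonneg_solvable k (submatrix (\<lambda>i j. \<omega> (i, j)) R C)}"
proof -
  have "finite R" "finite C"
    using R C finite_subset by blast+
  then have R_enum: "bij_betw ((!) (sorted_list_of_set R)) {..<k} R"
    and C_enum: "bij_betw ((!) (sorted_list_of_set C)) {..<k} C"
    using R C bij_betw_nth_sorted_list_of_set by fastforce+
  have in_I: "(sorted_list_of_set R ! a, sorted_list_of_set C ! b) \<in> {..<m} \<times> {..<n}"
    if "a < k" "b < k" for a b
    using bij_betwE[OF R_enum] bij_betwE[OF C_enum] R C that by blast
  show "{\<omega> \<in> space P. nonneg_solvable k (submatrix (\<lambda>i j. \<omega> (i, j)) R C)} \<in> sets P"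
    unfolding P_def submatrix_def
    by (intro sets_nonneg_solvable borel_measurable_PiM_component[OF sets_M] in_I)
  show "ennreal (2 / 4 ^ k) \<le> emeasure P {\<omega> \<in> space P. nonneg_solvable k (submatrix (\<lambda>i j. \<omega> (i, j)) R C)}"
    using emeasure_nonneg_solvable_ge[OF M sets_M symm atomless _ k bij_betw_imp_inj_on[OF R_enum]
        bij_betw_imp_inj_on[OF C_enum] in_I]
    by (simp add: P_def submatrix_def)
qed

lemma nn_integral_num_equilibria_ge:
  fixes M :: "real measure"
  assumes M: "prob_space M" and sets_M: "sets M = sets borel" and symm: "distr M borel uminus = M"
    and atomless: "\<And>x. emeasure M {x} = 0" and s: "s > 0" and k: "0 < k"
  shows "ennreal (real ((m choose k) * (n choose k)) * (2 / 4 ^ k))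
    \<le> (\<integral>\<^sup>+\<omega>. of_nat (num_equilibria m n k (\<lambda>i j. 1 + s * \<omega> (i, j))) \<partial>PiM ({..<m} \<times> {..<n}) (\<lambda>_. M))"
proof -
  let ?P = "PiM ({..<m} \<times> {..<n}) (\<lambda>_. M)"
  define T where "T = {R. R \<subseteq> {..<m} \<and> card R = k} \<times> {C. C \<subseteq> {..<n} \<and> card C = k}"
  define E where "E p = {\<omega> \<in> space ?P. nonneg_solvable k (submatrix (\<lambda>i j. \<omega> (i, j)) (fst p) (snd p))}"
    for p
  have "finite {R. R \<subseteq> {..<l} \<and> card R = k}" for l :: nat
    by (rule finite_subset[of _ "Pow {..<l}"]) auto
  then have T_finite: "finite T"
    by (simp add: T_def)
  have T_card: "card T = (m choose k) * (n choose k)"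
    unfolding T_def card_cartesian_product using n_subsets[of "{..<m}" k] n_subsets[of "{..<n}" k] by simp
  have E_sets: "E p \<in> sets ?P" and E_ge: "ennreal (2 / 4 ^ k) \<le> emeasure ?P (E p)" if "p \<in> T" for p
    using emeasure_nonneg_solvable_submatrix_ge[OF M sets_M symm atomless k, of "fst p" m "snd p" n] that
    by (auto simp: T_def E_def)
  have count: "(\<Sum>p\<in>T. indicator (E p) \<omega>) \<le> (of_nat (num_equilibria m n k (\<lambda>i j. 1 + s * \<omega> (i, j))) :: ennreal)"
    if "\<omega> \<in> space ?P" for \<omega>
  proof -
    have "(\<Sum>p\<in>T. indicator (E p) \<omega>) = (of_nat (card {p \<in> T. \<omega> \<in> E p}) :: ennreal)"
      using T_finite by (simp add: indicator_def sum.If_cases Int_def)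
    moreover have "card {p \<in> T. \<omega> \<in> E p} \<le> num_equilibria m n k (\<lambda>i j. 1 + s * \<omega> (i, j))"
      using card_nonneg_solvable_submatrices_le_num_equilibria[OF s k, of m n "\<lambda>i j. \<omega> (i, j)"] that
      by (simp add: T_def E_def)
    ultimately show ?thesis
      by simp
  qed
  have "ennreal (real ((m choose k) * (n choose k)) * (2 / 4 ^ k)) = of_nat (card T) * ennreal (2 / 4 ^ k)"
    by (simp only: T_card ennreal_of_nat_eq_real_of_nat) (intro ennreal_mult; simp)
  also have "\<dots> \<le> (\<Sum>p\<in>T. emeasure ?P (E p))"
    using sum_mono[of T "\<lambda>_. ennreal (2 / 4 ^ k)" "\<lambda>p. emeasure ?P (E p)"] E_ge by simp
  also have "\<dots> = (\<integral>\<^sup>+\<omega>. (\<Sum>p\<in>T. indicator (E p) \<omega>) \<partial>?P)"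
    using E_sets by (simp add: nn_integral_sum)
  also have "\<dots> \<le> (\<integral>\<^sup>+\<omega>. of_nat (num_equilibria m n k (\<lambda>i j. 1 + s * \<omega> (i, j))) \<partial>?P)"
    by (rule nn_integral_mono) (rule count)
  finally show ?thesis .
qed

lemma distr_uminus_density_lborel:
  fixes f :: "real \<Rightarrow> real"
  assumes [measurable]: "f \<in> borel_measurable borel" and "\<And>x. f (- x) = f x"
  shows "distr (density lborel (\<lambda>x. ennreal (f x))) borel uminus = density lborel (\<lambda>x. ennreal (f x))"
proof -
  have "density lborel (\<lambda>x. ennreal (f x)) = density (distr lborel borel uminus) (\<lambda>x. ennreal (f x))"
    by (simp only: lborel_distr_uminus)
  also have "\<dots> = distr (density lborel (\<lambda>x. ennreal (f (- x)))) borel uminus"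
    by (rule density_distr) simp_all
  finally show ?thesis
    by (simp add: assms(2))
qed

lemma binomial_product_ge:
  fixes m n k :: nat
  assumes "k \<le> m" and "k \<le> n"
  shows "2 * (real (m * n) / (4 * real k ^ 2)) ^ k \<le> real ((m choose k) * (n choose k)) * (2 / 4 ^ k)"
proof -
  have "2 * (real (m * n) / (4 * real k ^ 2)) ^ k = 2 * ((real m / real k) ^ k * (real n / real k) ^ k) / 4 ^ k"
    by (simp add: power2_eq_square power_mult_distrib power_divide)
  also have "\<dots> \<le> 2 * (real (m choose k) * real (n choose k)) / 4 ^ k"
    using binomial_ge_n_over_k_pow_k[OF assms(1)] binomial_ge_n_over_k_pow_k[OF assms(2)]
    by (intro divide_right_mono mult_left_mono mult_mono) auto
  also have "\<dots> = real ((m choose k) * (n choose k)) * (2 / 4 ^ k)"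
    by simp
  finally show ?thesis .
qed

theorem corollary9:
  fixes s :: real and m n k :: nat and f :: "real \<Rightarrow> real"
  assumes "s > 0" and "m \<ge> 1" and "n \<ge> 1" and "1 \<le> k" and "k \<le> min m n"
    and "f \<in> borel_measurable borel"
    and "\<forall>x. 0 \<le> f x"
    and "(\<integral>\<^sup>+ x. ennreal (f x) \<partial>lborel) = 1"
    and "\<forall>x. \<bar>x\<bar> > 1 \<longrightarrow> f x = 0"
    and "\<forall>x. f (- x) = f x"
  shows "(\<integral>\<^sup>+ \<omega>. of_nat (num_equilibria m n k (\<lambda>i j. 1 + s * \<omega> (i, j)))
            \<partial>(PiM ({..<m} \<times> {..<n}) (\<lambda>_. density lborel (\<lambda>x. ennreal (f x)))))
         \<ge> ennreal (2 * (real (m * n) / (4 * real k ^ 2)) ^ k)"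
proof -
  let ?M = "density lborel (\<lambda>x. ennreal (f x))"
  have "prob_space ?M"
    using assms(6,8) by (intro prob_spaceI) (simp add: emeasure_density)
  moreover have "distr ?M borel uminus = ?M"
    using assms(6,10) by (intro distr_uminus_density_lborel) auto
  moreover have "emeasure ?M {x} = 0" for x
    using assms(6) by (simp add: emeasure_density)
  ultimately have "ennreal (real ((m choose k) * (n choose k)) * (2 / 4 ^ k))
      \<le> (\<integral>\<^sup>+\<omega>. of_nat (num_equilibria m n k (\<lambda>i j. 1 + s * \<omega> (i, j))) \<partial>PiM ({..<m} \<times> {..<n}) (\<lambda>_. ?M))"
    using assms(1,4) by (intro nn_integral_num_equilibria_ge) auto
  moreover have "2 * (real (m * n) / (4 * real k ^ 2)) ^ k \<le> real ((m choose k) * (n choose k)) * (2 / 4 ^ k)"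
    using assms(5) by (intro binomial_product_ge) auto
  ultimately show ?thesis
    using ennreal_leI order_trans by blast
qed

end
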